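(* Let $R$ be a (unital, not necessarily commutative) ring, considered as a first-order structure in the language of rings. If either $R$ has characteristic zero or $R$ is an infinite domain (a ring without zero divisors), then $R$ does not have near linear Zarankiewicz bounds.
   Context: For a bipartite graph with vertex sorts $V,W$ and edge relation $E\subseteq V\times W$, it is $K_{m,n}$-free if it contains no complete bipartite subgraph with parts of sizes $m$ and $n$. A class $\mathcal{C}$ of finite bipartite graphs has near linear Zarankiewicz bounds if for every $m$ and every real $\varepsilon>0$ there is a real $\lambda>0$ such that every $K_{m,m}$-free member $\mathcal{G}$ of $\mathcal{C}$ has at most $\lambda|\mathcal{G}|^{1+\varepsilon}$ edges, where $|\mathcal{G}|$ is the number of vertices. A bipartite graph has near linear Zarankiewicz bounds if the class of its finite substructures does; a structure has near linear Zarankiewicz bounds if every bipartite graph definable (with parameters) in it does. *)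

theory Defs
  imports Complex_Main
begin

datatype rtm = RVar nat | RZero | ROne | RAdd rtm rtm | RNeg rtm | RSub rtm rtm | RMul rtm rtm

datatype rfm = REq rtm rtm | RNot rfm | RAnd rfm rfm | ROr rfm rfm | REx nat rfm | RAll nat rfm

primrec rtm_eval :: "rtm \<Rightarrow> (nat \<Rightarrow> 'a::ring_1) \<Rightarrow> 'a" where
  "rtm_eval (RVar i) e = e i"
| "rtm_eval RZero e = 0"
| "rtm_eval ROne e = 1"
| "rtm_eval (RAdd s t) e = rtm_eval s e + rtm_eval t e"
| "rtm_eval (RNeg s) e = - rtm_eval s e"
| "rtm_eval (RSub s t) e = rtm_eval s e - rtm_eval t e"
| "rtm_eval (RMul s t) e = rtm_eval s e * rtm_eval t e"

primrec rsat :: "rfm \<Rightarrow> (nat \<Rightarrow> 'a::ring_1) \<Rightarrow> bool" where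
  "rsat (REq s t) e = (rtm_eval s e = rtm_eval t e)"
| "rsat (RNot \<phi>) e = (\<not> rsat \<phi> e)"
| "rsat (RAnd \<phi> \<psi>) e = (rsat \<phi> e \<and> rsat \<psi> e)"
| "rsat (ROr \<phi> \<psi>) e = (rsat \<phi> e \<or> rsat \<psi> e)"
| "rsat (REx i \<phi>) e = (\<exists>a. rsat \<phi> (e(i := a)))"
| "rsat (RAll i \<phi>) e = (\<forall>a. rsat \<phi> (e(i := a)))"

text \<open>A set of n-tuples (lists of length n) is definable with parameters in the ring 'a:
  the tuple occupies variables 0..n-1, all other variables are parameters.\<close>
definition definable :: "nat \<Rightarrow> 'a::ring_1 list set \<Rightarrow> bool" where
  "definable n S \<longleftrightarrow> (\<exists>\<phi> (p :: nat \<Rightarrow> 'a).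
     S = {xs. length xs = n \<and> rsat \<phi> (\<lambda>i. if i < n then xs ! i else p i)})"

definition definable_bipartite ::
  "nat \<Rightarrow> nat \<Rightarrow> 'a::ring_1 list set \<Rightarrow> 'a list set \<Rightarrow> ('a list \<times> 'a list) set \<Rightarrow> bool" where
  "definable_bipartite n k V W E \<longleftrightarrow>
     definable n V \<and> definable k W \<and> E \<subseteq> V \<times> W \<and>
     definable (n + k) {xs @ ys | xs ys. (xs, ys) \<in> E}"

definition Kmm_free :: "nat \<Rightarrow> 'v set \<Rightarrow> 'w set \<Rightarrow> ('v \<times> 'w) set \<Rightarrow> bool" where
  "Kmm_free m V W E \<longleftrightarrow>
     \<not> (\<exists>A B. A \<subseteq> V \<and> B \<subseteq> W \<and> card A = m \<and> card B = m \<and> finite A \<and> finite B \<and> A \<times> B \<subseteq> E)"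

definition near_linear_zarankiewicz :: "'v set \<Rightarrow> 'w set \<Rightarrow> ('v \<times> 'w) set \<Rightarrow> bool" where
  "near_linear_zarankiewicz V W E \<longleftrightarrow>
     (\<forall>m::nat. \<forall>\<epsilon>::real. \<epsilon> > 0 \<longrightarrow> (\<exists>c::real. c > 0 \<and>
        (\<forall>V0 W0. finite V0 \<and> finite W0 \<and> V0 \<subseteq> V \<and> W0 \<subseteq> W \<and>
           Kmm_free m V0 W0 (E \<inter> (V0 \<times> W0)) \<longrightarrow>
           real (card (E \<inter> (V0 \<times> W0))) \<le> c * real (card V0 + card W0) powr (1 + \<epsilon>))))"

definition ring_near_linear_zarankiewicz :: "'a::ring_1 itself \<Rightarrow> bool" where
  "ring_near_linear_zarankiewicz _ \<longleftrightarrow>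
     (\<forall>n k (V :: 'a list set) W E. definable_bipartite n k V W E \<longrightarrow>
        near_linear_zarankiewicz V W E)"

definition no_zero_divisors_ring :: "'a::ring_1 itself \<Rightarrow> bool" where
  "no_zero_divisors_ring _ \<longleftrightarrow> (\<forall>a b :: 'a. a * b = 0 \<longrightarrow> a = 0 \<or> b = 0)"

end

theory Submission
  imports Defs "HOL-Number_Theory.Cong" "HOL-Library.FuncSet"
begin

text \<open>The incidence graph between points \<open>(x, y)\<close> and lines \<open>y = a x + b\<close> is definable in
  every ring. Suppose \<open>X X + B \<subseteq> Y\<close>, \<open>|Y| \<le> 4 |B|\<close>, \<open>|Y| \<le> 4 |X|^2\<close>, and that on \<open>X\<close> the
  equation \<open>a (x - x') = a' (x - x')\<close> forces \<open>x = x'\<close> or \<open>a = a'\<close>. Then the points \<open>X \<times> Y\<close>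
  and the lines with slope in \<open>X\<close> and intercept in \<open>B\<close> span a \<open>K\<^sub>2\<^sub>,\<^sub>2\<close>-free graph
  with \<open>|X|^2 |B|\<close> edges on only \<open>O(|X| |Y|) = O(|X|^3)\<close> vertices, which defeats every
  bound \<open>\<lambda> N^(7/6)\<close> once \<open>|X|\<close> is large. Such configurations with \<open>|X|\<close> arbitrarily
  large exist: in characteristic 0 take the integers below \<open>n\<close>, \<open>n^2\<close> and \<open>2 n^2\<close>; in a
  domain of characteristic \<open>p\<close> with an element \<open>t\<close> of infinite multiplicative order take
  the values at \<open>t\<close> of polynomials over the prime field of degree below \<open>d\<close> and \<open>2 d\<close>;
  and in an infinite domain of characteristic \<open>p\<close> whose nonzero elements are all roots
  of unity take finite subrings. These are arbitrarily large: if their size were bounded,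
  every commutative subring would be finite, since adjoining a commuting root of unity
  to a finite subring keeps it finite, and then by induction on the size of the center
  every subring would be finite, because conjugation by a noncentral element \<open>a\<close> splits
  a subring into eigenspaces, each of which embeds into the centralizer of \<open>a\<close>.\<close>

lemma one_plus_power_binomial:
  fixes y :: "'a::ring_1"
  shows "(1 + y) ^ n = (\<Sum>k\<le>n. of_nat (n choose k) * y ^ k)"
proof (induction n)
  case 0
  show ?case by simp
next
  case (Suc n)
  have "(\<Sum>k\<le>n. of_nat (n choose k) * y ^ k) = (\<Sum>k\<le>Suc n. of_nat (n choose k) * y ^ k)"
    by (simp add: binomial_eq_0)
  also have "\<dots> = 1 + (\<Sum>k\<le>n. of_nat (n choose Suc k) * y ^ Suc k)"
    by (subst sum.atMost_Suc_shift) simp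
  finally have low: "(\<Sum>k\<le>n. of_nat (n choose k) * y ^ k) =
      1 + (\<Sum>k\<le>n. of_nat (n choose Suc k) * y ^ Suc k)" .
  have high: "y * (\<Sum>k\<le>n. of_nat (n choose k) * y ^ k) = (\<Sum>k\<le>n. of_nat (n choose k) * y ^ Suc k)"
    by (simp add: sum_distrib_left mult_of_nat_commute mult.assoc)
  have "(1 + y) ^ Suc n = (1 + y) ^ n + y * (1 + y) ^ n"
    by (simp add: distrib_right)
  also have "\<dots> = (\<Sum>k\<le>n. of_nat (n choose k) * y ^ k) + (\<Sum>k\<le>n. of_nat (n choose k) * y ^ Suc k)"
    unfolding Suc.IH high ..
  also have "\<dots> = 1 + (\<Sum>k\<le>n. of_nat (Suc n choose Suc k) * y ^ Suc k)"
    unfolding low by (simp add: sum.distrib distrib_right add.assoc)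
  also have "\<dots> = (\<Sum>k\<le>Suc n. of_nat (Suc n choose k) * y ^ k)"
    by (subst sum.atMost_Suc_shift) (simp del: binomial_Suc_Suc)
  finally show ?case .
qed

lemma one_diff_power_eq_ring_1:
  fixes b :: "'a::ring_1"
  shows "(1 - b) * (\<Sum>i<n. b ^ i) = 1 - b ^ n"
proof (induction n)
  case (Suc n)
  have "(1 - b) * (\<Sum>i<Suc n. b ^ i) = (1 - b) * (\<Sum>i<n. b ^ i) + (1 - b) * b ^ n"
    by (simp add: distrib_left)
  also have "\<dots> = 1 - b ^ Suc n"
    unfolding Suc.IH by (simp add: left_diff_distrib)
  finally show ?case .
qed simp

lemma power_eq_power_mod:
  fixes a :: "'a::monoid_mult"
  assumes "a ^ m = 1"
  shows "a ^ k = a ^ (k mod m)"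
proof -
  have "a ^ k = (a ^ m) ^ (k div m) * a ^ (k mod m)"
    by (simp flip: power_mult power_add)
  then show ?thesis
    using assms by simp
qed

lemma sum_lessThan_add_split:
  "(\<Sum>i<m + n. f i) = (\<Sum>i<m. f i) + (\<Sum>i<n. f (m + (i::nat)))"
  by (induction n) (simp_all add: add.assoc)

lemma sum_lessThan_shift_periodic:
  fixes f :: "nat \<Rightarrow> 'a::ab_group_add"
  assumes "f m = f 0"
  shows "(\<Sum>j<m. f (Suc j)) = (\<Sum>j<m. f j)"
  using sum.lessThan_Suc_shift[of f m] sum.lessThan_Suc[of f m] assms by simp

lemma of_nat_mod_CHAR: "(of_nat (k mod CHAR('a)) :: 'a::ring_1) = of_nat k"
  by (simp add: of_nat_eq_iff_cong_CHAR cong_def)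

lemma of_int_eq_iff_CHAR_0:
  "CHAR('a::ring_1) = 0 \<Longrightarrow> (of_int m :: 'a) = of_int n \<longleftrightarrow> m = n"
  by (simp add: of_int_eq_iff_cong_CHAR)

section \<open>The point-line incidence graph\<close>

definition plane :: "'a list set" where
  "plane = {xs. length xs = 2}"

definition incidence :: "('a::ring_1 list \<times> 'a list) set" where
  "incidence = {([x, y], [a, b]) | x y a b. y = a * x + b}"

lemma definable_plane: "definable 2 (plane :: 'a::ring_1 list set)"
  unfolding definable_def plane_def
  by (rule exI[of _ "REq RZero RZero"], rule exI[of _ "\<lambda>_. 0"]) simp

lemma length_4_cases:
  assumes "length l = 4"
  obtains x y a b where "l = [x, y, a, b]"
  using assms by (auto simp: numeral_eq_Suc length_Suc_conv)

lemma incidence_append: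
  "{xs @ ys | xs ys. (xs, ys) \<in> incidence} = {[x, y, a, b] | x y a b. y = a * x + b}"
proof (intro set_eqI iffI)
  fix l :: "'a list"
  assume "l \<in> {[x, y, a, b] | x y a b. y = a * x + b}"
  then obtain x y a b where "l = [x, y] @ [a, b]" "([x, y], [a, b]) \<in> incidence"
    unfolding incidence_def by auto
  then show "l \<in> {xs @ ys | xs ys. (xs, ys) \<in> incidence}"
    by blast
qed (auto simp: incidence_def)

lemma definable_bipartite_incidence:
  "definable_bipartite 2 2 (plane :: 'a::ring_1 list set) plane incidence"
proof -
  \<comment> \<open>variables 0, 1, 2, 3 hold \<open>x, y, a, b\<close>\<close>
  let ?\<phi> = "REq (RVar 1) (RAdd (RMul (RVar 2) (RVar 0)) (RVar 3))"
  have edges: "{xs @ ys | xs ys. (xs, ys) \<in> (incidence :: ('a list \<times> 'a list) set)} =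
        {l. length l = 2 + 2 \<and> rsat ?\<phi> (\<lambda>i. if i < 2 + 2 then l ! i else 0)}"
    unfolding incidence_append
  proof (intro set_eqI iffI)
    fix l :: "'a list"
    assume "l \<in> {l. length l = 2 + 2 \<and> rsat ?\<phi> (\<lambda>i. if i < 2 + 2 then l ! i else 0)}"
    then have len: "length l = 4" and eq: "l ! 1 = l ! 2 * l ! 0 + l ! 3"
      by simp_all
    from len obtain x y a b where "l = [x, y, a, b]"
      by (rule length_4_cases)
    with eq show "l \<in> {[x, y, a, b] | x y a b. y = a * x + b}"
      by simp
  next
    fix l :: "'a list"
    assume "l \<in> {[x, y, a, b] | x y a b. y = a * x + b}"
    then obtain x y a b where "l = [x, y, a, b]" "y = a * x + b"
      by blast
    then show "l \<in> {l. length l = 2 + 2 \<and> rsat ?\<phi> (\<lambda>i. if i < 2 + 2 then l ! i else 0)}"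
      by simp
  qed
  have "definable (2 + 2) {xs @ ys | xs ys. (xs, ys) \<in> (incidence :: ('a list \<times> 'a list) set)}"
    unfolding definable_def by (intro exI) (rule edges)
  moreover have "incidence \<subseteq> plane \<times> plane"
    by (auto simp: incidence_def plane_def)
  ultimately show ?thesis
    using definable_plane unfolding definable_bipartite_def by blast
qed

definition grid :: "'a set \<Rightarrow> 'a set \<Rightarrow> 'a list set" where
  "grid X Y = {[x, y] | x y. x \<in> X \<and> y \<in> Y}"

lemma grid_eq_image: "grid X Y = (\<lambda>(x, y). [x, y]) ` (X \<times> Y)"
  by (auto simp: grid_def)

lemma grid_subset_plane: "grid X Y \<subseteq> plane"
  by (auto simp: grid_def plane_def)

lemma finite_grid: "finite X \<Longrightarrow> finite Y \<Longrightarrow> finite (grid X Y)"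
  by (simp add: grid_eq_image)

lemma card_grid: "card (grid X Y) = card X * card Y"
proof -
  have "inj_on (\<lambda>(x, y). [x, y]) (X \<times> Y)"
    by (auto simp: inj_on_def)
  then show ?thesis
    by (simp add: grid_eq_image card_image card_cartesian_product)
qed

text \<open>Each line passes
  through \<open>card X\<close> of the points, and the cancellation condition says that two distinct
  lines share at most one point.\<close>
definition incidence_config :: "'a::ring_1 set \<Rightarrow> 'a set \<Rightarrow> 'a set \<Rightarrow> bool" where
  "incidence_config X B Y \<longleftrightarrow> finite X \<and> finite Y \<and> B \<noteq> {} \<and> B \<subseteq> Y \<and>
     (\<forall>a\<in>X. \<forall>x\<in>X. \<forall>b\<in>B. a * x + b \<in> Y) \<and>
     (\<forall>a\<in>X. \<forall>a'\<in>X. \<forall>x\<in>X. \<forall>x'\<in>X. a * (x - x') = a' * (x - x') \<longrightarrow> x = x' \<or> a = a') \<and>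
     card Y \<le> 4 * card B \<and> card Y \<le> 4 * card X ^ 2"

lemma Kmm_free_incidence_config:
  assumes cfg: "incidence_config X B Y"
  shows "Kmm_free 2 (grid X Y) (grid X B) (incidence \<inter> (grid X Y \<times> grid X B))"
  unfolding Kmm_free_def
proof
  assume "\<exists>P L. P \<subseteq> grid X Y \<and> L \<subseteq> grid X B \<and> card P = 2 \<and> card L = 2 \<and>
    finite P \<and> finite L \<and> P \<times> L \<subseteq> incidence \<inter> (grid X Y \<times> grid X B)"
  then obtain P L where PL: "P \<subseteq> grid X Y" "L \<subseteq> grid X B" "card P = 2" "card L = 2"
    "P \<times> L \<subseteq> incidence" by blast
  obtain p1 p2 where P: "P = {p1, p2}" "p1 \<noteq> p2"
    using PL(3) card_2_iff by metis
  obtain l1 l2 where L: "L = {l1, l2}" "l1 \<noteq> l2"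
    using PL(4) card_2_iff by metis
  obtain x1 y1 where p1: "p1 = [x1, y1]" "x1 \<in> X" using PL(1) P by (auto simp: grid_def)
  obtain x2 y2 where p2: "p2 = [x2, y2]" "x2 \<in> X" using PL(1) P by (auto simp: grid_def)
  obtain a1 b1 where l1: "l1 = [a1, b1]" "a1 \<in> X" using PL(2) L by (auto simp: grid_def)
  obtain a2 b2 where l2: "l2 = [a2, b2]" "a2 \<in> X" using PL(2) L by (auto simp: grid_def)
  have on: "y1 = a1 * x1 + b1" "y1 = a2 * x1 + b2" "y2 = a1 * x2 + b1" "y2 = a2 * x2 + b2"
    using PL(5) unfolding P L p1 p2 l1 l2 by (auto simp: incidence_def)
  have "a1 * x1 - a1 * x2 = y1 - y2"
    using on(1,3) by (simp add: algebra_simps)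
  also have "\<dots> = a2 * x1 - a2 * x2"
    using on(2,4) by (simp add: algebra_simps)
  finally have "a1 * (x1 - x2) = a2 * (x1 - x2)"
    by (simp add: algebra_simps)
  with cfg p1 p2 l1 l2 have "x1 = x2 \<or> a1 = a2"
    unfolding incidence_config_def by blast
  then show False
    using on P(2) L(2) p1 p2 l1 l2 by auto
qed

lemma card_incidence_config:
  assumes cfg: "incidence_config X B Y"
  shows "card X ^ 2 * card B \<le> card (incidence \<inter> (grid X Y \<times> grid X B))"
proof -
  let ?E = "incidence \<inter> (grid X Y \<times> grid X B)"
  let ?f = "\<lambda>(x, a, b). ([x, a * x + b], [a, b])"
  have fin: "finite X" "finite Y" "finite B"
    using cfg finite_subset unfolding incidence_config_def by auto
  have "?f (x, a, b) \<in> ?E" if "x \<in> X" "a \<in> X" "b \<in> B" for x a b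
  proof -
    have "a * x + b \<in> Y" "b \<in> Y"
      using cfg that unfolding incidence_config_def by auto
    then have "[x, a * x + b] \<in> grid X Y" "[a, b] \<in> grid X B"
      using that unfolding grid_def by blast+
    moreover have "([x, a * x + b], [a, b]) \<in> incidence"
      unfolding incidence_def by blast
    ultimately show ?thesis
      by simp
  qed
  then have sub: "?f ` (X \<times> X \<times> B) \<subseteq> ?E"
    by auto
  have inj: "inj_on ?f (X \<times> X \<times> B)"
    by (auto simp: inj_on_def)
  have "finite (grid X Y \<times> grid X B)"
    using fin by (simp add: finite_grid)
  then have "finite ?E"
    by (rule finite_subset[rotated]) (rule Int_lower2)
  then have "card (?f ` (X \<times> X \<times> B)) \<le> card ?E"
    using sub by (rule card_mono)
  then have "card (X \<times> X \<times> B) \<le> card ?E"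
    by (simp only: card_image[OF inj])
  then show ?thesis
    by (simp add: card_cartesian_product power2_eq_square)
qed

lemma powr_one_sixth_le:
  fixes n y :: real
  assumes n: "0 < n" and y: "0 < y" "y \<le> 4 * n^2"
  shows "(2 * n * y) powr (1/6) \<le> 2 * sqrt n"
proof -
  have "(2 * n * y) powr (1/6) \<le> (8 * n^3) powr (1/6)"
    using n y by (intro powr_mono2) (auto simp: power3_eq_cube power2_eq_square)
  also have "\<dots> = 8 powr (1/6) * sqrt n"
  proof -
    have "(n^3) powr (1/6) = (n powr 3) powr (1/6)"
      using n by (simp add: powr_realpow)
    also have "\<dots> = n powr (3 * (1/6))"
      by (rule powr_powr)
    also have "\<dots> = sqrt n"
      using n by (simp add: powr_half_sqrt)
    finally show ?thesis
      using n by (simp add: powr_mult)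
  qed
  also have "\<dots> \<le> 2 * sqrt n"
  proof -
    have "(8::real) powr (1/6) \<le> (2 powr 6) powr (1/6)"
      by (intro powr_mono2) auto
    then have "(8::real) powr (1/6) \<le> 2"
      by (simp add: powr_powr)
    then show ?thesis
      using n by (intro mult_right_mono) auto
  qed
  finally show ?thesis .
qed

lemma powr_bound_violated:
  fixes n b y c :: real
  assumes c: "0 < c" and n: "256 * c^2 < n" and y: "0 < y" "y \<le> 4 * b" "y \<le> 4 * n^2"
  shows "c * (2 * n * y) powr (1 + 1/6) < n^2 * b"
proof -
  have n0: "0 < n"
    using n c by (metis less_trans mult_pos_pos zero_less_numeral zero_less_power)
  have "(16 * c)^2 < (sqrt n)^2"
    using n n0 by simp
  then have "16 * c < sqrt n"
    by (rule power_less_imp_less_base) (use n0 in simp)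
  from mult_strict_right_mono[OF this, of "sqrt n"]
  have small: "16 * c * sqrt n < n"
    using n0 by simp
  have "c * (2 * n * y) powr (1 + 1/6) = c * (2 * n * y) * (2 * n * y) powr (1/6)"
    using n0 y by (subst powr_add) simp
  also have "\<dots> \<le> c * (2 * n * y) * (2 * sqrt n)"
    using c n0 y powr_one_sixth_le[OF n0 y(1,3)] by (intro mult_left_mono) auto
  also have "\<dots> = n * y / 4 * (16 * c * sqrt n)"
    by simp
  also have "\<dots> < n * y / 4 * n"
    using small n0 y by (intro mult_strict_left_mono) auto
  also have "\<dots> \<le> n^2 * b"
    using n0 y by (simp add: power2_eq_square mult_left_mono)
  finally show ?thesis .
qed

lemma not_ring_near_linear_zarankiewicz_if_incidence_configs:
  assumes configs: "\<And>K. \<exists>X B Y :: 'a::ring_1 set. incidence_config X B Y \<and> K \<le> card X"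
  shows "\<not> ring_near_linear_zarankiewicz TYPE('a)"
proof
  assume "ring_near_linear_zarankiewicz TYPE('a)"
  then have "near_linear_zarankiewicz (plane :: 'a list set) plane incidence"
    using definable_bipartite_incidence unfolding ring_near_linear_zarankiewicz_def by blast
  then obtain c :: real where c: "c > 0" and bound: "\<And>V0 W0. finite V0 \<Longrightarrow> finite W0 \<Longrightarrow>
      V0 \<subseteq> (plane :: 'a list set) \<Longrightarrow> W0 \<subseteq> plane \<Longrightarrow> Kmm_free 2 V0 W0 (incidence \<inter> (V0 \<times> W0)) \<Longrightarrow>
      real (card (incidence \<inter> (V0 \<times> W0))) \<le> c * real (card V0 + card W0) powr (1 + 1/6)"
    unfolding near_linear_zarankiewicz_def by (metis divide_pos_pos zero_less_one zero_less_numeral)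
  obtain X B Y :: "'a set" where cfg: "incidence_config X B Y" and "nat \<lceil>256 * c^2\<rceil> < card X"
    using configs[of "Suc (nat \<lceil>256 * c^2\<rceil>)"] by (auto simp: Suc_le_eq)
  then have large: "256 * c^2 < card X"
    by (meson le_less_trans of_nat_less_iff real_nat_ceiling_ge)
  have fin: "finite X" "finite Y" "finite B"
    using cfg finite_subset unfolding incidence_config_def by auto
  have cards: "0 < card B" "card B \<le> card Y" "card Y \<le> 4 * card B" "card Y \<le> 4 * card X ^ 2"
    using cfg fin card_mono unfolding incidence_config_def by auto
  let ?E = "incidence \<inter> (grid X Y \<times> grid X B)"
  have "real (card ?E) \<le> c * real (card (grid X Y) + card (grid X B)) powr (1 + 1/6)"
    using bound Kmm_free_incidence_config[OF cfg] fin by (simp add: finite_grid grid_subset_plane)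
  also have "\<dots> \<le> c * (2 * real (card X) * real (card Y)) powr (1 + 1/6)"
  proof -
    have "card X * card B \<le> card X * card Y"
      using cards by simp
    then have "card (grid X Y) + card (grid X B) \<le> 2 * card X * card Y"
      unfolding card_grid by linarith
    then have "real (card (grid X Y) + card (grid X B)) \<le> 2 * real (card X) * real (card Y)"
      by (metis of_nat_le_iff of_nat_mult of_nat_numeral)
    then show ?thesis
      using c by (intro mult_left_mono powr_mono2) auto
  qed
  also have "\<dots> < real (card X) ^ 2 * real (card B)"
    using c large cards by (intro powr_bound_violated) (simp_all flip: of_nat_power of_nat_mult)
  also have "\<dots> \<le> card ?E"
    using card_incidence_config[OF cfg] by (simp flip: of_nat_power of_nat_mult)
  finally show False
    by simp
qed

lemma of_nat_differences_cancel_CHAR_0: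
  assumes char: "CHAR('a::ring_1) = 0"
    and "of_nat i * (of_nat j - of_nat j') = (of_nat i' * (of_nat j - of_nat j') :: 'a)"
  shows "(of_nat j :: 'a) = of_nat j' \<or> (of_nat i :: 'a) = of_nat i'"
proof -
  have "(of_int (int i * (int j - int j')) :: 'a) = of_int (int i' * (int j - int j'))"
    using assms(2) by simp
  then have "int i * (int j - int j') = int i' * (int j - int j')"
    using of_int_eq_iff_CHAR_0[OF char] by blast
  then show ?thesis
    by auto
qed

lemma char_0_incidence_configs:
  assumes char: "CHAR('a::ring_1) = 0"
  shows "\<exists>X B Y :: 'a set. incidence_config X B Y \<and> K \<le> card X"
proof -
  define n where "n = Suc K"
  define X where "X = (of_nat :: nat \<Rightarrow> 'a) ` {..<n}"
  define B where "B = (of_nat :: nat \<Rightarrow> 'a) ` {..<n * n}"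
  define Y where "Y = (of_nat :: nat \<Rightarrow> 'a) ` {..<2 * n * n}"
  have "inj (of_nat :: nat \<Rightarrow> 'a)"
    using of_int_eq_iff_CHAR_0[OF char] by (metis injI of_int_of_nat_eq of_nat_eq_iff)
  then have cards: "card X = n" "card B = n * n" "card Y = 2 * n * n"
    unfolding X_def B_def Y_def by (simp_all add: card_image inj_on_subset)
  have "incidence_config X B Y"
    unfolding incidence_config_def
  proof (intro conjI ballI impI)
    show "finite X" "finite Y" "B \<noteq> {}" "B \<subseteq> Y"
      unfolding X_def B_def Y_def n_def by auto
    show "card Y \<le> 4 * card B" "card Y \<le> 4 * card X ^ 2"
      unfolding cards by (simp_all add: power2_eq_square)
  next
    fix a x b assume "a \<in> X" "x \<in> X" "b \<in> B"
    then obtain i j k where "a = of_nat i" "x = of_nat j" "b = of_nat k" "i < n" "j < n" "k < n * n"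
      unfolding X_def B_def by auto
    moreover have "i * j \<le> n * n"
      using \<open>i < n\<close> \<open>j < n\<close> by (intro mult_mono) auto
    ultimately show "a * x + b \<in> Y"
      unfolding Y_def by (auto intro!: image_eqI[of _ _ "i * j + k"])
  next
    fix a a' x x' assume "a \<in> X" "a' \<in> X" "x \<in> X" "x' \<in> X" and eq: "a * (x - x') = a' * (x - x')"
    then obtain i i' j j' where "a = of_nat i" "a' = of_nat i'" "x = of_nat j" "x' = of_nat j'"
      unfolding X_def by auto
    with eq show "x = x' \<or> a = a'"
      using of_nat_differences_cancel_CHAR_0[OF char, of i j j' i'] by auto
  qed
  moreover have "K \<le> card X"
    using cards n_def by simp
  ultimately show ?thesis
    by blast
qed

definition subring :: "'a::ring_1 set \<Rightarrow> bool" where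
  "subring S \<longleftrightarrow> 1 \<in> S \<and> (\<forall>x\<in>S. \<forall>y\<in>S. x + y \<in> S \<and> x * y \<in> S) \<and> (\<forall>x\<in>S. - x \<in> S)"

lemma subring_one: "subring S \<Longrightarrow> 1 \<in> S"
  and subring_add: "subring S \<Longrightarrow> x \<in> S \<Longrightarrow> y \<in> S \<Longrightarrow> x + y \<in> S"
  and subring_mult: "subring S \<Longrightarrow> x \<in> S \<Longrightarrow> y \<in> S \<Longrightarrow> x * y \<in> S"
  and subring_uminus: "subring S \<Longrightarrow> x \<in> S \<Longrightarrow> - x \<in> S"
  unfolding subring_def by blast+

lemma subring_zero: "subring S \<Longrightarrow> 0 \<in> S"
  using subring_add[of S 1 "- 1"] subring_one subring_uminus by fastforce

lemma subring_power: "subring S \<Longrightarrow> x \<in> S \<Longrightarrow> x ^ n \<in> S"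
  by (induction n) (auto intro: subring_mult subring_one)

lemma subring_sum: "subring S \<Longrightarrow> (\<And>i. i \<in> I \<Longrightarrow> f i \<in> S) \<Longrightarrow> sum f I \<in> S"
  by (induction I rule: infinite_finite_induct) (auto intro: subring_add subring_zero)

lemma subring_of_nat: "subring S \<Longrightarrow> of_nat n \<in> S"
  by (induction n) (auto intro: subring_add subring_one subring_zero)

lemma subring_UNIV: "subring UNIV"
  unfolding subring_def by simp

lemma subring_range_of_nat:
  assumes "CHAR('a::ring_1) \<noteq> 0"
  shows "subring (range (of_nat :: nat \<Rightarrow> 'a))"
  unfolding subring_def
proof (intro conjI ballI)
  show "(1::'a) \<in> range of_nat"
    using of_nat_1 by (metis rangeI)
next
  fix x y :: 'a assume "x \<in> range of_nat" "y \<in> range of_nat"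
  then obtain i j where "x = of_nat i" "y = of_nat j" by blast
  then show "x + y \<in> range of_nat" "x * y \<in> range of_nat"
    by (metis of_nat_add rangeI, metis of_nat_mult rangeI)
next
  fix x :: 'a assume "x \<in> range of_nat"
  then obtain i where x: "x = of_nat i" by blast
  have "of_nat ((CHAR('a) - 1) * i) + x = of_nat (CHAR('a) * i)"
    using assms unfolding x by (cases "CHAR('a)") (simp_all add: algebra_simps)
  also have "\<dots> = 0"
    by simp
  finally have "of_nat ((CHAR('a) - 1) * i) + x = 0" .
  then have "- x = of_nat ((CHAR('a) - 1) * i)"
    by (simp only: neg_eq_iff_add_eq_0 add.commute)
  then show "- x \<in> range of_nat"
    by (simp only: rangeI)
qed

lemma finite_range_of_nat:
  assumes "CHAR('a::ring_1) \<noteq> 0"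
  shows "finite (range (of_nat :: nat \<Rightarrow> 'a))"
proof -
  have "of_nat k \<in> (of_nat ` {..<CHAR('a)} :: 'a set)" for k
    using assms of_nat_mod_CHAR[of k, where 'a='a] by (metis lessThan_iff mod_less_divisor
        gr0I image_eqI)
  then have "range (of_nat :: nat \<Rightarrow> 'a) \<subseteq> of_nat ` {..<CHAR('a)}"
    by blast
  then show ?thesis
    using finite_subset by blast
qed

definition center :: "'a::ring_1 set \<Rightarrow> 'a set" where
  "center S = {z \<in> S. \<forall>x\<in>S. z * x = x * z}"

definition centralizer :: "'a::ring_1 set \<Rightarrow> 'a \<Rightarrow> 'a set" where
  "centralizer S a = {x \<in> S. x * a = a * x}"

lemma center_center: "center (center S) = center S"
  unfolding center_def by blast

lemma subring_centralizer:
  assumes S: "subring S"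
  shows "subring (centralizer S a)"
  unfolding subring_def centralizer_def
proof (intro conjI ballI)
  show "1 \<in> {x \<in> S. x * a = a * x}"
    using subring_one[OF S] by simp
next
  fix x y assume x: "x \<in> {x \<in> S. x * a = a * x}" and y: "y \<in> {x \<in> S. x * a = a * x}"
  have xa: "x * a = a * x" and ya: "y * a = a * y"
    using x y by simp_all
  have "x * y * a = x * (a * y)"
    by (simp add: mult.assoc ya)
  also have "\<dots> = a * (x * y)"
    by (simp add: xa flip: mult.assoc)
  finally have "(x + y) * a = a * (x + y)" "x * y * a = a * (x * y)"
    by (simp_all add: distrib_left distrib_right xa ya)
  then show "x + y \<in> {x \<in> S. x * a = a * x}" "x * y \<in> {x \<in> S. x * a = a * x}"
    using x y S by (simp_all add: subring_add subring_mult)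
next
  fix x assume "x \<in> {x \<in> S. x * a = a * x}"
  then show "- x \<in> {x \<in> S. x * a = a * x}"
    using S by (simp add: subring_uminus)
qed

lemma center_eq_centralizers: "center S = {z \<in> S. \<forall>a\<in>S. z \<in> centralizer S a}"
  unfolding center_def centralizer_def by auto

lemma subring_center:
  assumes S: "subring S"
  shows "subring (center S)"
  unfolding subring_def
proof (intro conjI ballI)
  have "1 \<in> centralizer S a" for a
    using subring_one[OF subring_centralizer[OF S]] .
  then show "1 \<in> center S"
    using subring_one[OF S] unfolding center_eq_centralizers by blast
next
  fix x y assume "x \<in> center S" "y \<in> center S"
  then have "x \<in> centralizer S a" "y \<in> centralizer S a" if "a \<in> S" for a
    using that unfolding center_eq_centralizers by blast+
  then have "x + y \<in> centralizer S a" "x * y \<in> centralizer S a" if "a \<in> S" for a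
    using that subring_add subring_mult subring_centralizer[OF S] by blast+
  moreover have "x + y \<in> S" "x * y \<in> S"
    using \<open>x \<in> center S\<close> \<open>y \<in> center S\<close> S subring_add subring_mult
    unfolding center_def by blast+
  ultimately show "x + y \<in> center S" "x * y \<in> center S"
    unfolding center_eq_centralizers by blast+
next
  fix x assume x: "x \<in> center S"
  then have "- x \<in> centralizer S a" if "a \<in> S" for a
    using that subring_uminus subring_centralizer[OF S] unfolding center_eq_centralizers by blast
  moreover have "- x \<in> S"
    using x S subring_uminus unfolding center_def by blast
  ultimately show "- x \<in> center S"
    unfolding center_eq_centralizers by blast
qed

section \<open>Polynomial values\<close>

definition poly_vals :: "'a::ring_1 set \<Rightarrow> 'a \<Rightarrow> nat \<Rightarrow> 'a set" where
  "poly_vals R t d = {\<Sum>i<d. r i * t ^ i | r. \<forall>i<d. r i \<in> R}"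

lemma poly_valsI: "\<forall>i<d. r i \<in> R \<Longrightarrow> (\<Sum>i<d. r i * t ^ i) \<in> poly_vals R t d"
  unfolding poly_vals_def by blast

lemma poly_valsE:
  assumes "x \<in> poly_vals R t d"
  obtains r where "\<forall>i<d. r i \<in> R" "x = (\<Sum>i<d. r i * t ^ i)"
  using assms unfolding poly_vals_def by blast

lemma finite_poly_vals:
  assumes "finite R"
  shows "finite (poly_vals R t d)"
proof -
  let ?f = "\<lambda>xs. \<Sum>i<d. xs ! i * t ^ i"
  have "poly_vals R t d \<subseteq> ?f ` {xs. set xs \<subseteq> R \<and> length xs = d}"
  proof
    fix x assume "x \<in> poly_vals R t d"
    then obtain r where r: "\<forall>i<d. r i \<in> R" and x: "x = (\<Sum>i<d. r i * t ^ i)"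
      by (rule poly_valsE)
    have "x = ?f (map r [0..<d])"
      unfolding x by (rule sum.cong) simp_all
    moreover have "map r [0..<d] \<in> {xs. set xs \<subseteq> R \<and> length xs = d}"
      using r by auto
    ultimately show "x \<in> ?f ` {xs. set xs \<subseteq> R \<and> length xs = d}"
      by blast
  qed
  moreover have "finite {xs. set xs \<subseteq> R \<and> length xs = d}"
    using assms by (rule finite_lists_length_eq)
  ultimately show ?thesis
    by (meson finite_imageI finite_subset)
qed

lemma poly_vals_subset_subring:
  assumes S: "subring S" and "R \<subseteq> S" "t \<in> S"
  shows "poly_vals R t d \<subseteq> S"
proof
  fix x assume "x \<in> poly_vals R t d"
  then obtain r where "\<forall>i<d. r i \<in> R" and x: "x = (\<Sum>i<d. r i * t ^ i)"
    by (rule poly_valsE)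
  then show "x \<in> S"
    using assms by (auto intro!: subring_sum subring_mult subring_power)
qed

context
  fixes R :: "'a::ring_1 set" and t :: 'a
  assumes R: "subring R" and t_comm: "\<forall>r\<in>R. t * r = r * t"
begin

lemma power_commutes_coeff: "r \<in> R \<Longrightarrow> t ^ k * r = r * t ^ k"
  using t_comm by (simp add: power_commuting_commutes)

lemma monomial_in_poly_vals:
  assumes "r \<in> R" "i < d"
  shows "r * t ^ i \<in> poly_vals R t d"
proof -
  have "(\<Sum>j<d. (if j = i then r else 0) * t ^ j) = (\<Sum>j<d. if j = i then r * t ^ j else 0)"
    by (rule sum.cong) simp_all
  also have "\<dots> = r * t ^ i"
    using assms(2) by simp
  finally show ?thesis
    using poly_valsI[of d "\<lambda>j. if j = i then r else 0" R t] assms(1) subring_zero[OF R] by simp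
qed

lemma poly_vals_add:
  assumes "x \<in> poly_vals R t d" "y \<in> poly_vals R t d"
  shows "x + y \<in> poly_vals R t d"
proof -
  obtain r where r: "\<forall>i<d. r i \<in> R" "x = (\<Sum>i<d. r i * t ^ i)"
    using assms(1) by (rule poly_valsE)
  obtain s where s: "\<forall>i<d. s i \<in> R" "y = (\<Sum>i<d. s i * t ^ i)"
    using assms(2) by (rule poly_valsE)
  have "(\<Sum>i<d. (r i + s i) * t ^ i) \<in> poly_vals R t d"
    using r(1) s(1) R by (intro poly_valsI) (simp add: subring_add)
  then show ?thesis
    unfolding r(2) s(2) by (simp add: sum.distrib distrib_right)
qed

lemma poly_vals_uminus:
  assumes "x \<in> poly_vals R t d"
  shows "- x \<in> poly_vals R t d"
proof -
  obtain r where r: "\<forall>i<d. r i \<in> R" "x = (\<Sum>i<d. r i * t ^ i)"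
    using assms by (rule poly_valsE)
  have "(\<Sum>i<d. (- r i) * t ^ i) \<in> poly_vals R t d"
    using r(1) R by (intro poly_valsI) (simp add: subring_uminus)
  then show ?thesis
    using r(2) by (simp add: sum_negf)
qed

lemma zero_in_poly_vals: "0 \<in> poly_vals R t d"
  using poly_valsI[of d "\<lambda>_. 0" R t] subring_zero[OF R] by simp

lemma poly_vals_sum:
  "(\<And>i. i \<in> I \<Longrightarrow> f i \<in> poly_vals R t d) \<Longrightarrow> sum f I \<in> poly_vals R t d"
  by (induction I rule: infinite_finite_induct) (auto intro: poly_vals_add zero_in_poly_vals)

lemma poly_vals_power_mult:
  assumes "x \<in> poly_vals R t d"
  shows "t ^ k * x \<in> poly_vals R t (d + k)"
proof -
  obtain r where r: "\<forall>i<d. r i \<in> R" "x = (\<Sum>i<d. r i * t ^ i)"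
    using assms by (rule poly_valsE)
  have "t ^ k * x = (\<Sum>i<d. r i * t ^ (k + i))"
    unfolding r(2) sum_distrib_left
  proof (rule sum.cong)
    fix i assume "i \<in> {..<d}"
    then have "t ^ k * r i = r i * t ^ k"
      using r(1) by (simp add: power_commutes_coeff)
    then show "t ^ k * (r i * t ^ i) = r i * t ^ (k + i)"
      by (simp add: power_add mult.assoc flip: mult.assoc[of "t ^ k"])
  qed simp
  also have "\<dots> \<in> poly_vals R t (d + k)"
    using r(1) by (intro poly_vals_sum monomial_in_poly_vals) auto
  finally show ?thesis .
qed

lemma poly_vals_mono:
  assumes "d \<le> e"
  shows "poly_vals R t d \<subseteq> poly_vals R t e"
proof
  fix x assume "x \<in> poly_vals R t d"
  then obtain r where r: "\<forall>i<d. r i \<in> R" "x = (\<Sum>i<d. r i * t ^ i)"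
    by (rule poly_valsE)
  then show "x \<in> poly_vals R t e"
    using assms by (auto intro!: poly_vals_sum monomial_in_poly_vals)
qed

lemma poly_vals_left_mult:
  assumes "r \<in> R" "x \<in> poly_vals R t d"
  shows "r * x \<in> poly_vals R t d"
proof -
  obtain s where s: "\<forall>i<d. s i \<in> R" "x = (\<Sum>i<d. s i * t ^ i)"
    using assms(2) by (rule poly_valsE)
  have "(\<Sum>i<d. (r * s i) * t ^ i) \<in> poly_vals R t d"
    using s(1) assms(1) R by (intro poly_valsI) (simp add: subring_mult)
  then show ?thesis
    unfolding s(2) by (simp add: sum_distrib_left mult.assoc)
qed

lemma poly_vals_mult:
  assumes "x \<in> poly_vals R t d" "y \<in> poly_vals R t d"
  shows "x * y \<in> poly_vals R t (2 * d)"
proof -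
  obtain r where r: "\<forall>i<d. r i \<in> R" "x = (\<Sum>i<d. r i * t ^ i)"
    using assms(1) by (rule poly_valsE)
  have "t ^ i * y \<in> poly_vals R t (2 * d)" if "i < d" for i
    using poly_vals_power_mult[OF assms(2), of i] poly_vals_mono[of "d + i" "2 * d"] that by auto
  then have "r i * (t ^ i * y) \<in> poly_vals R t (2 * d)" if "i < d" for i
    using poly_vals_left_mult r(1) that by blast
  then have "(\<Sum>i<d. r i * (t ^ i * y)) \<in> poly_vals R t (2 * d)"
    by (intro poly_vals_sum) simp
  then show ?thesis
    unfolding r(2) by (simp add: sum_distrib_right mult.assoc)
qed

lemma poly_vals_double_subset:
  "poly_vals R t (2 * d) \<subseteq> (\<lambda>(x, y). x + t ^ d * y) ` (poly_vals R t d \<times> poly_vals R t d)"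
proof
  fix z assume "z \<in> poly_vals R t (2 * d)"
  then obtain r where r: "\<forall>i<2 * d. r i \<in> R" "z = (\<Sum>i<2 * d. r i * t ^ i)"
    by (rule poly_valsE)
  let ?x = "\<Sum>i<d. r i * t ^ i" and ?y = "\<Sum>i<d. r (d + i) * t ^ i"
  have "t ^ d * ?y = (\<Sum>i<d. r (d + i) * t ^ (d + i))"
    unfolding sum_distrib_left
  proof (rule sum.cong)
    fix i assume "i \<in> {..<d}"
    then have "t ^ d * r (d + i) = r (d + i) * t ^ d"
      using r(1) by (simp add: power_commutes_coeff)
    then show "t ^ d * (r (d + i) * t ^ i) = r (d + i) * t ^ (d + i)"
      by (simp add: power_add mult.assoc flip: mult.assoc[of "t ^ d"])
  qed simp
  then have "z = ?x + t ^ d * ?y"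
    unfolding r(2) mult_2 sum_lessThan_add_split by simp
  moreover have "?x \<in> poly_vals R t d" "?y \<in> poly_vals R t d"
    using r(1) by (auto intro!: poly_valsI)
  ultimately show "z \<in> (\<lambda>(x, y). x + t ^ d * y) ` (poly_vals R t d \<times> poly_vals R t d)"
    by force
qed

lemma card_poly_vals_double:
  assumes "finite R"
  shows "card (poly_vals R t (2 * d)) \<le> card (poly_vals R t d) ^ 2"
proof -
  have fin: "finite (poly_vals R t d)"
    using assms by (rule finite_poly_vals)
  have "card (poly_vals R t (2 * d)) \<le> card ((\<lambda>(x, y). x + t ^ d * y) ` (poly_vals R t d \<times> poly_vals R t d))"
    using fin by (intro card_mono poly_vals_double_subset) auto
  also have "\<dots> \<le> card (poly_vals R t d \<times> poly_vals R t d)"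
    using fin by (intro card_image_le) auto
  finally show ?thesis
    by (simp add: card_cartesian_product power2_eq_square)
qed

context
  fixes n :: nat
  assumes n: "0 < n" and t_root: "t ^ n = 1"
begin

lemma subring_poly_vals: "subring (poly_vals R t n)"
  unfolding subring_def
proof (intro conjI ballI)
  show "1 \<in> poly_vals R t n"
    using monomial_in_poly_vals[OF subring_one[OF R] n] by simp
next
  fix x y assume x: "x \<in> poly_vals R t n" and y: "y \<in> poly_vals R t n"
  show "x + y \<in> poly_vals R t n"
    using x y by (rule poly_vals_add)
  have "x * y \<in> (\<lambda>(x, y). x + t ^ n * y) ` (poly_vals R t n \<times> poly_vals R t n)"
    using poly_vals_mult[OF x y] poly_vals_double_subset by blast
  then show "x * y \<in> poly_vals R t n"
    using t_root by (auto intro: poly_vals_add)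
next
  fix x assume "x \<in> poly_vals R t n"
  then show "- x \<in> poly_vals R t n"
    by (rule poly_vals_uminus)
qed

lemma subset_poly_vals: "R \<subseteq> poly_vals R t n"
  using monomial_in_poly_vals[OF _ n] by force

lemma generator_in_poly_vals: "t \<in> poly_vals R t n"
proof -
  have "t = 1 * t ^ (1 mod n)"
    using power_eq_power_mod[OF t_root, of 1] by simp
  then show ?thesis
    using monomial_in_poly_vals[OF subring_one[OF R], of "1 mod n" n] n by simp
qed

end

end

text \<open>Having no zero divisors is a hypothesis on the type, not a type class, hence a locale.\<close>
locale domain_type =
  fixes ty :: "'a::ring_1 itself"
  assumes no_zero_divisors: "no_zero_divisors_ring TYPE('a)"
begin

lemma domain_mult_eq_0_iff: "(a::'a) * b = 0 \<longleftrightarrow> a = 0 \<or> b = 0"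
  using no_zero_divisors unfolding no_zero_divisors_ring_def by auto

lemma domain_power_eq_0_iff: "(a::'a) ^ n = 0 \<longleftrightarrow> a = 0 \<and> 0 < n"
  by (induction n) (auto simp: domain_mult_eq_0_iff)

lemma domain_mult_left_cancel: "(a::'a) \<noteq> 0 \<Longrightarrow> a * x = a * y \<longleftrightarrow> x = y"
  using domain_mult_eq_0_iff[of a "x - y"] by (auto simp: right_diff_distrib)

lemma domain_differences_cancel: "(a::'a) * (x - x') = a' * (x - x') \<Longrightarrow> x = x' \<or> a = a'"
  using domain_mult_eq_0_iff[of "a - a'" "x - x'"] by (auto simp: left_diff_distrib)

lemma prime_CHAR:
  assumes "CHAR('a) \<noteq> 0"
  shows "prime CHAR('a)"
proof (rule prime_natI)
  show "2 \<le> CHAR('a)"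
    using assms CHAR_not_1[where 'a='a] by linarith
next
  fix m n assume "CHAR('a) dvd m * n"
  then have "(of_nat m :: 'a) * of_nat n = 0"
    by (simp flip: of_nat_mult add: of_nat_eq_0_iff_char_dvd)
  then show "CHAR('a) dvd m \<or> CHAR('a) dvd n"
    by (simp add: domain_mult_eq_0_iff of_nat_eq_0_iff_char_dvd)
qed

lemma frobenius_one_plus:
  assumes "CHAR('a) \<noteq> 0"
  shows "(1 + y) ^ CHAR('a) = 1 + (y::'a) ^ CHAR('a)"
proof -
  let ?p = "CHAR('a)"
  have "(1 + y) ^ ?p = (\<Sum>k\<in>{0, ?p}. of_nat (?p choose k) * y ^ k)"
    unfolding one_plus_power_binomial
  proof (rule sum.mono_neutral_right)
    show "\<forall>k\<in>{..?p} - {0, ?p}. of_nat (?p choose k) * y ^ k = 0"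
    proof
      fix k assume "k \<in> {..?p} - {0, ?p}"
      then have "?p dvd (?p choose k)"
        using dvd_choose_prime prime_CHAR[OF assms] assms by simp
      then have "(of_nat (?p choose k) :: 'a) = 0"
        by (simp only: of_nat_eq_0_iff_char_dvd)
      then show "of_nat (?p choose k) * y ^ k = 0"
        by simp
    qed
  qed auto
  also have "\<dots> = 1 + y ^ ?p"
    using assms by simp
  finally show ?thesis .
qed

lemma root_of_unity_CHAR_eq_1:
  assumes "CHAR('a) \<noteq> 0" and "(b::'a) ^ CHAR('a) = 1"
  shows "b = 1"
proof -
  have "1 + (b - 1) ^ CHAR('a) = 1"
    using frobenius_one_plus[OF assms(1), of "b - 1"] assms(2) by simp
  then show ?thesis
    using assms(1) by (simp add: domain_power_eq_0_iff)
qed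

lemma sum_powers_root_of_unity:
  assumes "(b::'a) ^ m = 1" "b \<noteq> 1"
  shows "(\<Sum>i<m. b ^ i) = 0"
  using one_diff_power_eq_ring_1[of b m] assms by (simp add: domain_mult_eq_0_iff)

lemma inj_powers:
  assumes "(t::'a) \<noteq> 0" and non_torsion: "\<And>n. 0 < n \<Longrightarrow> t ^ n \<noteq> 1"
  shows "inj (\<lambda>i. t ^ i)"
proof -
  have "t ^ i \<noteq> t ^ j" if "i < j" for i j
  proof
    assume eq: "t ^ i = t ^ j"
    have "t ^ i * t ^ (j - i) = t ^ j"
      using that by (simp flip: power_add)
    then have "t ^ i * t ^ (j - i) = t ^ i * 1"
      using eq by simp
    then have "t ^ (j - i) = 1"
      using domain_mult_left_cancel[of "t ^ i" "t ^ (j - i)" 1] assms(1)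
      by (simp add: domain_power_eq_0_iff)
    then show False
      using non_torsion that by simp
  qed
  then show ?thesis
    by (metis injI linorder_neqE_nat)
qed

lemma non_torsion_incidence_configs:
  assumes char: "CHAR('a) \<noteq> 0" and "(t::'a) \<noteq> 0" "\<And>n. 0 < n \<Longrightarrow> t ^ n \<noteq> 1"
  shows "\<exists>X B Y :: 'a set. incidence_config X B Y \<and> K \<le> card X"
proof -
  let ?P = "range (of_nat :: nat \<Rightarrow> 'a)"
  let ?X = "poly_vals ?P t K" and ?Y = "poly_vals ?P t (2 * K)"
  have P: "subring ?P" "finite ?P"
    using char subring_range_of_nat finite_range_of_nat by auto
  have t_comm: "\<forall>r\<in>?P. t * r = r * t"
    by (auto simp: mult_of_nat_commute)
  have fin: "finite ?X" "finite ?Y"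
    using P(2) by (simp_all add: finite_poly_vals)
  have "incidence_config ?X ?Y ?Y"
    unfolding incidence_config_def
  proof (intro conjI ballI impI)
    show "finite ?X" "finite ?Y" "?Y \<subseteq> ?Y" "card ?Y \<le> 4 * card ?Y"
      using fin by simp_all
    show "?Y \<noteq> {}"
      using zero_in_poly_vals[OF P(1) t_comm] by blast
    show "card ?Y \<le> 4 * card ?X ^ 2"
      using card_poly_vals_double[OF P(1) t_comm P(2), of K] by simp
  next
    fix a x b assume "a \<in> ?X" "x \<in> ?X" "b \<in> ?Y"
    then show "a * x + b \<in> ?Y"
      using poly_vals_add[OF P(1) t_comm] poly_vals_mult[OF P(1) t_comm] by blast
  next
    fix a a' x x' :: 'a
    assume "a * (x - x') = a' * (x - x')"
    then show "x = x' \<or> a = a'"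
      by (rule domain_differences_cancel)
  qed
  moreover have "(\<lambda>i. t ^ i) ` {..<K} \<subseteq> ?X"
    using monomial_in_poly_vals[OF P(1) t_comm subring_one[OF P(1)]] by auto
  then have "K \<le> card ?X"
    using inj_powers[OF assms(2,3)] fin
    by (metis card_image card_lessThan card_mono inj_on_subset subset_UNIV)
  ultimately show ?thesis
    by blast
qed

lemma incidence_config_finite_subring:
  assumes "subring (R :: 'a set)" "finite R"
  shows "incidence_config R R R"
  unfolding incidence_config_def
proof (intro conjI ballI impI)
  show "finite R" "finite R" "R \<subseteq> R" "card R \<le> 4 * card R"
    using assms by simp_all
  show "R \<noteq> {}"
    using subring_one[OF assms(1)] by blast
  then have "1 \<le> card R"
    using assms(2) by (simp add: Suc_le_eq card_gt_0_iff)
  then show "card R \<le> 4 * card R ^ 2"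
    by (simp add: power2_eq_square)
next
  fix a x b assume "a \<in> R" "x \<in> R" "b \<in> R"
  then show "a * x + b \<in> R"
    using assms(1) by (simp add: subring_add subring_mult)
next
  fix a a' x x' :: 'a
  assume "a * (x - x') = a' * (x - x')"
  then show "x = x' \<or> a = a'"
    by (rule domain_differences_cancel)
qed

end

section \<open>Torsion domains of positive characteristic\<close>

text \<open>For \<open>a\<close> of order \<open>m\<close>, \<open>m\<close> times the component of \<open>w\<close> in the eigenspace
  \<open>{v. v * a = a ^ i * v}\<close> of conjugation by \<open>a\<close>, as in a discrete Fourier transform.\<close>
definition eigencomponent :: "'a::ring_1 \<Rightarrow> nat \<Rightarrow> nat \<Rightarrow> 'a \<Rightarrow> 'a" where
  "eigencomponent a m i w = (\<Sum>j<m. a ^ ((m - i) * j) * w * a ^ j)"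

lemma eigencomponent_eigen:
  fixes a :: "'a::ring_1"
  assumes a: "a ^ m = 1" and "i \<le> m"
  shows "eigencomponent a m i w * a = a ^ i * eigencomponent a m i w"
proof -
  define f where "f j = a ^ ((m - i) * j) * w * a ^ j" for j
  have shift: "a ^ i * f (Suc j) = f j * a" for j
  proof -
    have "i + (m - i) * Suc j = m + (m - i) * j"
      using \<open>i \<le> m\<close> by simp
    then have "a ^ i * a ^ ((m - i) * Suc j) = a ^ ((m - i) * j)"
      using a by (simp flip: power_add add: power_add[of a m])
    then show ?thesis
      unfolding f_def by (simp add: power_commutes mult.assoc flip: mult.assoc[of "a ^ i"])
  qed
  have "f m = f 0"
    using a by (simp add: f_def mult.commute[of _ m] power_mult)
  then have periodic: "(\<Sum>j<m. f (Suc j)) = (\<Sum>j<m. f j)"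
    by (rule sum_lessThan_shift_periodic)
  have "(\<Sum>j<m. f j * a) = (\<Sum>j<m. a ^ i * f (Suc j))"
    by (simp add: shift)
  also have "\<dots> = a ^ i * (\<Sum>j<m. f j)"
    by (simp add: sum_distrib_left flip: periodic)
  finally show ?thesis
    by (simp add: eigencomponent_def f_def sum_distrib_right)
qed

lemma (in domain_type) sum_eigencomponents:
  assumes a: "a ^ m = 1" and "0 < m" and order: "\<And>k. 0 < k \<Longrightarrow> k < m \<Longrightarrow> (a::'a) ^ k \<noteq> 1"
  shows "(\<Sum>i<m. eigencomponent a m i w) = of_nat m * w"
proof -
  have coeff: "(\<Sum>i<m. a ^ ((m - i) * j)) = (if j = 0 then of_nat m else 0)" if "j < m" for j
  proof (cases "j = 0")
    case False
    define b where "b = a ^ j"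
    have "b ^ m = (a ^ m) ^ j"
      unfolding b_def by (metis mult.commute power_mult)
    then have "b ^ m = 1" "b \<noteq> 1"
      using a order[of j] that False by (simp_all add: b_def)
    then have "(\<Sum>i<m. b ^ i) = 0"
      by (rule sum_powers_root_of_unity)
    have "(\<Sum>i<m. a ^ ((m - i) * j)) = (\<Sum>i<m. b ^ Suc (m - Suc i))"
      by (rule sum.cong) (simp_all add: b_def Suc_diff_Suc mult.commute[of _ j] power_mult)
    also have "\<dots> = b * (\<Sum>i<m. b ^ i)"
      by (simp only: sum.nat_diff_reindex[where g = "\<lambda>i. b ^ Suc i"]) (simp add: sum_distrib_left)
    finally show ?thesis
      using \<open>(\<Sum>i<m. b ^ i) = 0\<close> False by simp
  qed simp
  have "(\<Sum>i<m. eigencomponent a m i w) = (\<Sum>j<m. (\<Sum>i<m. a ^ ((m - i) * j)) * w * a ^ j)"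
    unfolding eigencomponent_def by (subst sum.swap) (simp add: sum_distrib_right)
  also have "\<dots> = (\<Sum>j<m. if j = 0 then of_nat m * w else 0)"
    by (rule sum.cong) (simp_all add: coeff)
  also have "\<dots> = of_nat m * w"
    using \<open>0 < m\<close> by simp
  finally show ?thesis .
qed

locale torsion_domain_type = domain_type ty for ty :: "'a::ring_1 itself" +
  assumes CHAR_nonzero: "CHAR('a) \<noteq> 0"
    and torsion: "\<And>x::'a. x \<noteq> 0 \<Longrightarrow> \<exists>n>0. x ^ n = 1"
begin

lemma obtain_order:
  assumes "(a::'a) \<noteq> 0"
  obtains m where "0 < m" "a ^ m = 1" "\<And>k. 0 < k \<Longrightarrow> k < m \<Longrightarrow> a ^ k \<noteq> 1"
proof -
  define m where "m = (LEAST m. 0 < m \<and> a ^ m = 1)"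
  have "0 < m \<and> a ^ m = 1"
    unfolding m_def by (rule LeastI_ex) (use torsion[OF assms] in blast)
  moreover have "a ^ k \<noteq> 1" if "0 < k" "k < m" for k
    using not_less_Least[of k "\<lambda>m. 0 < m \<and> a ^ m = 1"] that unfolding m_def by blast
  ultimately show ?thesis
    using that by blast
qed

lemma of_nat_order_neq_0:
  assumes "0 < m" "(a::'a) ^ m = 1" "\<And>k. 0 < k \<Longrightarrow> k < m \<Longrightarrow> a ^ k \<noteq> 1"
  shows "(of_nat m :: 'a) \<noteq> 0"
proof
  assume "(of_nat m :: 'a) = 0"
  then obtain k where k: "m = CHAR('a) * k"
    by (auto simp: of_nat_eq_0_iff_char_dvd)
  have "2 \<le> CHAR('a)"
    using prime_CHAR[OF CHAR_nonzero] by (rule prime_ge_2_nat)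
  then have "0 < k" "k < m"
    using k \<open>0 < m\<close> by auto
  have "(a ^ k) ^ CHAR('a) = 1"
    using assms(2) k by (simp add: mult.commute flip: power_mult)
  then have "a ^ k = 1"
    by (rule root_of_unity_CHAR_eq_1[OF CHAR_nonzero])
  then show False
    using assms(3) \<open>0 < k\<close> \<open>k < m\<close> by blast
qed

lemma subring_inverse:
  assumes "subring S" "x \<in> S" "(x::'a) \<noteq> 0"
  obtains y where "y \<in> S" "x * y = 1" "y * x = 1"
proof -
  obtain n where "x ^ Suc n = 1"
    using torsion[OF assms(3)] by (metis gr0_implies_Suc)
  then have "x * x ^ n = 1" "x ^ n * x = 1"
    by (simp_all flip: power_Suc2)
  moreover have "x ^ n \<in> S"
    using assms(1,2) by (rule subring_power)
  ultimately show ?thesis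
    using that by blast
qed

lemma finite_subring_adjoin:
  assumes S: "subring S" and R: "subring R" "finite R" "R \<subseteq> S"
    and t: "(t::'a) \<in> S" "\<forall>r\<in>R. t * r = r * t"
  shows "\<exists>R'. subring R' \<and> finite R' \<and> insert t R \<subseteq> R' \<and> R' \<subseteq> S"
proof (cases "t = 0")
  case True
  then have "insert t R \<subseteq> R"
    using subring_zero[OF R(1)] by simp
  with R show ?thesis
    by (intro exI[of _ R]) simp
next
  case False
  then obtain n where n: "0 < n" "t ^ n = 1"
    using torsion by blast
  show ?thesis
  proof (intro exI conjI)
    show "subring (poly_vals R t n)"
      using R(1) t(2) n by (rule subring_poly_vals)
    show "finite (poly_vals R t n)"
      using R(2) by (rule finite_poly_vals)
    show "insert t R \<subseteq> poly_vals R t n"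
      using subset_poly_vals[OF R(1) t(2) n] generator_in_poly_vals[OF R(1) t(2) n] by blast
    show "poly_vals R t n \<subseteq> S"
      using S R(3) t(1) by (rule poly_vals_subset_subring)
  qed
qed

lemma finite_subring_containing:
  assumes S: "subring S" "center S = S" and "finite F" "F \<subseteq> (S::'a set)"
  shows "\<exists>R. subring R \<and> finite R \<and> F \<subseteq> R \<and> R \<subseteq> S"
  using \<open>finite F\<close> \<open>F \<subseteq> S\<close>
proof (induction F rule: finite_induct)
  case empty
  have "range of_nat \<subseteq> S"
    using subring_of_nat[OF S(1)] by blast
  then show ?case
    using subring_range_of_nat[OF CHAR_nonzero] finite_range_of_nat[OF CHAR_nonzero] by blast
next
  case (insert t F)
  then obtain R where R: "subring R" "finite R" "F \<subseteq> R" "R \<subseteq> S"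
    by blast
  have "t \<in> S" "\<forall>r\<in>R. t * r = r * t"
    using insert.prems R(4) S(2) unfolding center_def by blast+
  then obtain R' where R': "subring R'" "finite R'" "insert t R \<subseteq> R'" "R' \<subseteq> S"
    using finite_subring_adjoin[OF S(1) R(1,2,4)] by blast
  moreover have "insert t F \<subseteq> R'"
    using R(3) R'(3) by blast
  ultimately show ?case
    by blast
qed

lemma card_commutative_subring_less:
  assumes bound: "\<And>R :: 'a set. subring R \<Longrightarrow> finite R \<Longrightarrow> card R < M"
    and S: "subring S" "center S = (S::'a set)"
  shows "finite S \<and> card S < M"
proof (rule ccontr)
  assume "\<not> (finite S \<and> card S < M)"
  then obtain F where F: "F \<subseteq> S" "finite F" "card F = M"
    by (metis infinite_arbitrarily_large not_less obtain_subset_with_card_n)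
  then obtain R where R: "subring R" "finite R" "F \<subseteq> R"
    using finite_subring_containing[OF S F(2,1)] by blast
  then have "M \<le> card R"
    using F(3) card_mono by blast
  then show False
    using bound[OF R(1,2)] by simp
qed

lemma finite_twisted_centralizer:
  assumes S: "subring S" "a \<in> S" and C: "finite (centralizer S a)"
  shows "finite {v \<in> S. v * a = c * (v::'a)}"
proof (cases "{v \<in> S. v * a = c * v} \<subseteq> {0}")
  case True
  then show ?thesis
    using finite_subset by blast
next
  case False
  then obtain v0 where v0: "v0 \<in> S" "v0 * a = c * v0" "v0 \<noteq> 0"
    by blast
  obtain y0 where y0: "y0 \<in> S" "v0 * y0 = 1" "y0 * v0 = 1"
    using subring_inverse[OF S(1) v0(1,3)] .
  have "a * y0 = (y0 * v0) * a * y0"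
    using y0(3) by simp
  also have "\<dots> = y0 * c * (v0 * y0)"
    by (simp only: v0(2) mult.assoc)
  also have "\<dots> = y0 * c"
    using y0(2) by simp
  finally have ay0: "a * y0 = y0 * c" .
  have "(\<lambda>v. y0 * v) ` {v \<in> S. v * a = c * v} \<subseteq> centralizer S a"
  proof clarify
    fix v assume "v \<in> S" "v * a = c * v"
    then have "y0 * v * a = a * (y0 * v)"
      using ay0 by (simp add: mult.assoc flip: mult.assoc[of a])
    then show "y0 * v \<in> centralizer S a"
      using \<open>v \<in> S\<close> y0(1) S(1) by (simp add: centralizer_def subring_mult)
  qed
  moreover have "inj_on (\<lambda>v. y0 * v) {v \<in> S. v * a = c * v}"
    by (rule inj_onI) (metis mult.assoc mult_1 y0(2))
  ultimately show ?thesis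
    using C inj_on_finite by blast
qed

lemma finite_if_finite_centralizer:
  assumes S: "subring S" and a: "a \<in> S" "(a::'a) \<noteq> 0" and C: "finite (centralizer S a)"
  shows "finite S"
proof -
  obtain m where m: "0 < m" "a ^ m = 1" "\<And>k. 0 < k \<Longrightarrow> k < m \<Longrightarrow> a ^ k \<noteq> 1"
    using obtain_order[OF a(2)] by blast
  have sum_components: "(\<Sum>i<m. eigencomponent a m i w) = of_nat m * w" for w
    using m(2,1,3) by (rule sum_eigencomponents)
  have "(of_nat m :: 'a) \<noteq> 0"
    using m by (rule of_nat_order_neq_0)
  define K where "K i = {v \<in> S. v * a = a ^ i * v}" for i
  define \<Phi> where "\<Phi> w = restrict (\<lambda>i. eigencomponent a m i w) {..<m}" for w
  have "\<Phi> ` S \<subseteq> PiE {..<m} K"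
  proof clarify
    fix w assume "w \<in> S"
    then have "eigencomponent a m i w \<in> S" for i
      unfolding eigencomponent_def using S a(1) by (auto intro!: subring_sum subring_mult subring_power)
    then show "\<Phi> w \<in> PiE {..<m} K"
      using eigencomponent_eigen[OF m(2)] unfolding \<Phi>_def K_def by auto
  qed
  moreover have "finite (PiE {..<m} K)"
    using finite_twisted_centralizer[OF S a(1) C] unfolding K_def by (intro finite_PiE) auto
  moreover have "inj_on \<Phi> S"
  proof (rule inj_onI)
    fix w w' assume "\<Phi> w = \<Phi> w'"
    then have "(\<Sum>i<m. eigencomponent a m i w) = (\<Sum>i<m. eigencomponent a m i w')"
      unfolding \<Phi>_def by (metis (no_types, lifting) restrict_apply' sum.cong)
    then have "of_nat m * w = of_nat m * w'"
      by (simp add: sum_components)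
    then show "w = w'"
      using domain_mult_left_cancel \<open>(of_nat m :: 'a) \<noteq> 0\<close> by blast
  qed
  ultimately show ?thesis
    using inj_on_finite by blast
qed

lemma finite_subring_if_card_bounded:
  assumes bound: "\<And>R :: 'a set. subring R \<Longrightarrow> finite R \<Longrightarrow> card R < M" and "subring (S::'a set)"
  shows "finite S"
  using \<open>subring S\<close>
proof (induction "M - card (center S)" arbitrary: S rule: less_induct)
  case less
  have center_bounded: "finite (center T) \<and> card (center T) < M" if "subring T" for T :: "'a set"
    by (rule card_commutative_subring_less) (simp_all add: bound subring_center that center_center)
  show "finite S"
  proof (cases "center S = S")
    case True
    then show ?thesis
      using center_bounded[OF less.prems] by simp
  next
    case False
    then obtain a where a: "a \<in> S" "a \<notin> center S"
      unfolding center_def by blast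
    let ?S' = "centralizer S a"
    have S': "subring ?S'"
      using less.prems by (rule subring_centralizer)
    have "center S \<subset> center ?S'"
      using a unfolding center_def centralizer_def by auto
    then have "card (center S) < card (center ?S')"
      using center_bounded[OF S'] by (intro psubset_card_mono) auto
    then have "M - card (center ?S') < M - card (center S)"
      using center_bounded[OF S'] by linarith
    then have "finite ?S'"
      using less.hyps S' by blast
    moreover have "a \<noteq> 0"
      using a subring_zero[OF less.prems] unfolding center_def by auto
    ultimately show ?thesis
      using finite_if_finite_centralizer[OF less.prems a(1)] by blast
  qed
qed

lemma arbitrarily_large_finite_subrings:
  assumes "infinite (UNIV :: 'a set)"
  shows "\<exists>R :: 'a set. subring R \<and> finite R \<and> K \<le> card R"
proof (rule ccontr)
  assume "\<nexists>R :: 'a set. subring R \<and> finite R \<and> K \<le> card R"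
  then have "finite (UNIV :: 'a set)"
    using finite_subring_if_card_bounded[OF _ subring_UNIV, of K] by (meson not_le)
  then show False
    using assms by blast
qed

end

lemma (in domain_type) positive_char_incidence_configs:
  assumes "CHAR('a) \<noteq> 0" "infinite (UNIV :: 'a set)"
  shows "\<exists>X B Y :: 'a set. incidence_config X B Y \<and> K \<le> card X"
proof (cases "\<exists>t::'a. t \<noteq> 0 \<and> (\<forall>n>0. t ^ n \<noteq> 1)")
  case True
  then show ?thesis
    using non_torsion_incidence_configs[OF assms(1)] by blast
next
  case False
  interpret torsion_domain_type ty
    by unfold_locales (use assms(1) False in auto)
  show ?thesis
    using arbitrarily_large_finite_subrings[OF assms(2)] incidence_config_finite_subring by blast
qed

theorem proposition3p8:
  assumes "CHAR('a::ring_1) = 0 \<or> (infinite (UNIV :: 'a set) \<and> no_zero_divisors_ring TYPE('a))"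
  shows "\<not> ring_near_linear_zarankiewicz TYPE('a)"
proof (rule not_ring_near_linear_zarankiewicz_if_incidence_configs)
  fix K
  show "\<exists>X B Y :: 'a set. incidence_config X B Y \<and> K \<le> card X"
  proof (cases "CHAR('a) = 0")
    case True
    then show ?thesis
      by (rule char_0_incidence_configs)
  next
    case False
    with assms interpret domain_type "TYPE('a)"
      by unfold_locales auto
    show ?thesis
      using False assms by (intro positive_char_incidence_configs) auto
  qed
qed

end
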